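(* Let $\odot$ be a non-degenerate pseudo-multiplication on $[0,\infty]$ with left identity $1_{\odot}$. For $t\in[0,\infty]$ the following conditions are equivalent: (1) $t$ is $\odot$-finite; (2) $s\odot t$ is $\odot$-finite for some $s>0$; (3) $s\odot t\leqslant 1_{\odot}$ for some $s>0$; (4) $t\odot s'\leqslant 1_{\odot}$ for some $s'>0$; (5) $t\odot s'$ is $\odot$-finite for some $s'>0$.
   Context: A pseudo-multiplication is a binary operation $\odot:[0,\infty]\times[0,\infty]\to[0,\infty]$ such that: $\odot$ is associative; $\odot$ is continuous on $(0,\infty)\times[0,\infty]$; for every $t$, the map $s\mapsto s\odot t$ is continuous on $(0,\infty]$; $\odot$ is nondecreasing in each argument; there is a left identity element $1_{\odot}$, i.e. $1_{\odot}\odot t=t$ for all $t$; there are no zero divisors, i.e. $s\odot t=0$ implies $s=0$ or $t=0$; and $0$ is an annihilator, i.e. $0\odot t=t\odot 0=0$ for all $t$. For $t\in[0,\infty]$ put $O(t)=\inf_{s>0} s\odot t$. An element $t$ is called $\odot$-finite if $O(t)=0$, and $\odot$-infinite otherwise. The pseudo-multiplication $\odot$ is called non-degenerate if $O(1_{\odot})=0$. *)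

theory Defs
  imports "HOL-Analysis.Analysis" "HOL-Library.Extended_Nonnegative_Real"
begin

definition pseudo_mult :: "(ennreal \<Rightarrow> ennreal \<Rightarrow> ennreal) \<Rightarrow> ennreal \<Rightarrow> bool" where
  "pseudo_mult f e \<longleftrightarrow>
     (\<forall>a b c. f (f a b) c = f a (f b c)) \<and>
     continuous_on ({0<..<\<infinity>} \<times> UNIV) (\<lambda>(s, t). f s t) \<and>
     (\<forall>t. continuous_on {0<..} (\<lambda>s. f s t)) \<and>
     (\<forall>a b c. a \<le> b \<longrightarrow> f a c \<le> f b c) \<and>
     (\<forall>a b c. a \<le> b \<longrightarrow> f c a \<le> f c b) \<and>
     (\<forall>t. f e t = t) \<and>
     (\<forall>s t. f s t = 0 \<longrightarrow> s = 0 \<or> t = 0) \<and>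
     (\<forall>t. f 0 t = 0 \<and> f t 0 = 0)"

definition pm_O :: "(ennreal \<Rightarrow> ennreal \<Rightarrow> ennreal) \<Rightarrow> ennreal \<Rightarrow> ennreal" where
  "pm_O f t = (INF s\<in>{0<..}. f s t)"

definition pm_finite :: "(ennreal \<Rightarrow> ennreal \<Rightarrow> ennreal) \<Rightarrow> ennreal \<Rightarrow> bool" where
  "pm_finite f t \<longleftrightarrow> pm_O f t = 0"

definition pm_nondegenerate :: "(ennreal \<Rightarrow> ennreal \<Rightarrow> ennreal) \<Rightarrow> ennreal \<Rightarrow> bool" where
  "pm_nondegenerate f e \<longleftrightarrow> pm_O f e = 0"

end

theory Submission
  imports Defs
begin

text \<open>If \<open>t\<close> is finite then \<open>s \<odot> t < 1\<^sub>\<odot>\<close> for some \<open>s > 0\<close>, which gives (3) and, since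
  everything below \<open>1\<^sub>\<odot>\<close> is finite by non-degeneracy, also (2). Conversely
  \<open>O(t) \<le> O(s \<odot> t)\<close> and \<open>O(t) \<odot> s' \<le> O(t \<odot> s')\<close> by associativity and monotonicity, so (2) and
  (5) force \<open>O(t) = 0\<close>. The only real work is (1) \<open>\<Rightarrow>\<close> (4): with \<open>a = s \<odot> t\<close> strictly between
  \<open>0\<close> and \<open>\<infinity>\<close>, continuity of \<open>w \<mapsto> a \<odot> w\<close> at \<open>0\<close> yields \<open>w > 0\<close> with
  \<open>s \<odot> (t \<odot> w) = a \<odot> w < s \<odot> 1\<^sub>\<odot>\<close>, hence \<open>t \<odot> w < 1\<^sub>\<odot>\<close>.\<close>

locale pseudo_multiplication =
  fixes f :: "ennreal \<Rightarrow> ennreal \<Rightarrow> ennreal" and e :: ennreal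
  assumes pseudo_mult: "pseudo_mult f e"
begin

lemma assoc: "f (f a b) c = f a (f b c)"
  using pseudo_mult by (simp add: pseudo_mult_def)

lemma continuous_on_open_quadrant: "continuous_on ({0<..<\<infinity>} \<times> UNIV) (\<lambda>(s, t). f s t)"
  using pseudo_mult by (simp add: pseudo_mult_def)

lemma mono_left: "a \<le> b \<Longrightarrow> f a c \<le> f b c"
  using pseudo_mult by (simp add: pseudo_mult_def)

lemma mono_right: "a \<le> b \<Longrightarrow> f c a \<le> f c b"
  using pseudo_mult by (simp add: pseudo_mult_def)

lemma left_ident [simp]: "f e t = t"
  using pseudo_mult by (simp add: pseudo_mult_def)

lemma zero_left [simp]: "f 0 t = 0" and zero_right [simp]: "f t 0 = 0"
  using pseudo_mult by (simp_all add: pseudo_mult_def)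

lemma pos_mult: "0 < a \<Longrightarrow> 0 < b \<Longrightarrow> 0 < f a b"
  using pseudo_mult by (auto simp: pseudo_mult_def zero_less_iff_neq_zero)

lemma ident_pos: "0 < e"
  by (metis left_ident zero_left zero_less_iff_neq_zero zero_neq_one)

lemma continuous_on_left_section:
  assumes "0 < a" "a < \<infinity>"
  shows "continuous_on UNIV (f a)"
proof -
  have "continuous_on UNIV (\<lambda>y. (\<lambda>(s, t). f s t) (a, y))"
    by (rule continuous_on_compose2[OF continuous_on_open_quadrant
          continuous_on_Pair[OF continuous_on_const continuous_on_id]])
       (use assms in auto)
  then show ?thesis
    by simp
qed

lemma ex_pos_mult_right_less:
  assumes "0 < a" "a < \<infinity>" "0 < c"
  shows "\<exists>w>0. f a w < c"
proof -
  have "isCont (f a) 0"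
    using continuous_on_left_section[OF assms(1,2)] continuous_on_eq_continuous_at by blast
  then have "(f a \<longlongrightarrow> 0) (at_right 0)"
    using tendsto_mono[OF at_le[of "{0<..}" UNIV]] by (simp add: isCont_def)
  then have "eventually (\<lambda>w. f a w < c) (at_right 0)"
    using assms(3) by (rule order_tendstoD)
  then obtain b where "0 < b" and b: "\<And>w. 0 < w \<Longrightarrow> w < b \<Longrightarrow> f a w < c"
    unfolding eventually_at_right[OF zero_less_one] by blast
  then obtain w where "0 < w" "w < b"
    using dense by blast
  with b show ?thesis by blast
qed

lemma pm_O_mono: "a \<le> b \<Longrightarrow> pm_O f a \<le> pm_O f b"
  unfolding pm_O_def by (rule INF_mono) (use mono_right in blast)

lemma pm_finite_le: "pm_finite f b \<Longrightarrow> a \<le> b \<Longrightarrow> pm_finite f a"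
  using pm_O_mono[of a b] by (simp add: pm_finite_def)

lemma pm_finite_if_le_ident: "pm_nondegenerate f e \<Longrightarrow> x \<le> e \<Longrightarrow> pm_finite f x"
  using pm_finite_le[of e x] by (simp add: pm_nondegenerate_def pm_finite_def)

lemma pm_O_le_pm_O_mult_left:
  assumes "0 < s"
  shows "pm_O f t \<le> pm_O f (f s t)"
  unfolding pm_O_def
proof (rule INF_mono)
  fix r :: ennreal
  assume "r \<in> {0<..}"
  then show "\<exists>r'\<in>{0<..}. f r' t \<le> f r (f s t)"
    using pos_mult[OF _ assms] by (intro bexI[of _ "f r s"]) (simp_all add: assoc)
qed

lemma pm_finite_of_mult_left: "0 < s \<Longrightarrow> pm_finite f (f s t) \<Longrightarrow> pm_finite f t"
  using pm_O_le_pm_O_mult_left[of s t] by (simp add: pm_finite_def)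

lemma pm_O_mult_right_le_pm_O: "f (pm_O f t) s \<le> pm_O f (f t s)"
  unfolding pm_O_def
proof (rule INF_greatest)
  fix r :: ennreal
  assume "r \<in> {0<..}"
  then have "f (INF r\<in>{0<..}. f r t) s \<le> f (f r t) s"
    by (intro mono_left INF_lower)
  then show "f (INF r\<in>{0<..}. f r t) s \<le> f r (f t s)"
    by (simp add: assoc)
qed

lemma pm_finite_of_mult_right:
  assumes "0 < s" and "pm_finite f (f t s)"
  shows "pm_finite f t"
proof (rule ccontr)
  assume "\<not> pm_finite f t"
  then have "0 < f (pm_O f t) s"
    using assms(1) by (intro pos_mult) (simp_all add: pm_finite_def zero_less_iff_neq_zero)
  with pm_O_mult_right_le_pm_O[of t s] assms(2) show False
    by (simp add: pm_finite_def)
qed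

lemma pm_finite_imp_mult_left_less:
  assumes "pm_finite f t" and "0 < c"
  shows "\<exists>s>0. f s t < c"
proof -
  have "(INF s\<in>{0<..}. f s t) < c"
    using assms by (simp add: pm_finite_def pm_O_def)
  then show ?thesis
    by (auto simp: INF_less_iff)
qed

lemma pm_finite_imp_mult_right_le_ident:
  assumes "pm_finite f t"
  shows "\<exists>s'>0. f t s' \<le> e"
proof (cases "t = 0 \<or> e = \<infinity>")
  case True
  then show ?thesis
    by (intro exI[of _ 1]) auto
next
  case False
  obtain s where "0 < s" and s_t: "f s t < e"
    using pm_finite_imp_mult_left_less[OF assms ident_pos] by blast
  have "e < \<infinity>"
    using False by (simp add: top.not_eq_extremum)
  with s_t have "f s t < \<infinity>"
    by (rule order.strict_trans)
  moreover have "0 < f s t"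
    using False \<open>0 < s\<close> by (intro pos_mult) (simp_all add: zero_less_iff_neq_zero)
  ultimately obtain w where "0 < w" and "f (f s t) w < f s e"
    using ex_pos_mult_right_less pos_mult[OF \<open>0 < s\<close> ident_pos] by blast
  then have "f s (f t w) < f s e"
    by (simp add: assoc)
  then have "f t w < e"
    by (meson mono_right not_less)
  with \<open>0 < w\<close> show ?thesis
    by (blast intro: less_imp_le)
qed

end

theorem proposition2p4:
  fixes f :: "ennreal \<Rightarrow> ennreal \<Rightarrow> ennreal" and e t :: ennreal
  assumes "pseudo_mult f e" and "pm_nondegenerate f e"
  shows "(pm_finite f t \<longleftrightarrow> (\<exists>s>0. pm_finite f (f s t)))
       \<and> (pm_finite f t \<longleftrightarrow> (\<exists>s>0. f s t \<le> e))
       \<and> (pm_finite f t \<longleftrightarrow> (\<exists>s'>0. f t s' \<le> e))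
       \<and> (pm_finite f t \<longleftrightarrow> (\<exists>s'>0. pm_finite f (f t s')))"
proof -
  interpret pseudo_multiplication f e
    using assms(1) by (rule pseudo_multiplication.intro)
  note below_ident = pm_finite_if_le_ident[OF assms(2)]
  have "pm_finite f t \<Longrightarrow> \<exists>s>0. f s t \<le> e"
    using pm_finite_imp_mult_left_less[OF _ ident_pos] by (blast intro: less_imp_le)
  moreover have "\<exists>s>0. f s t \<le> e \<Longrightarrow> \<exists>s>0. pm_finite f (f s t)"
    using below_ident by blast
  moreover have "\<exists>s>0. pm_finite f (f s t) \<Longrightarrow> pm_finite f t"
    using pm_finite_of_mult_left by blast
  moreover have "pm_finite f t \<Longrightarrow> \<exists>s'>0. f t s' \<le> e"
    by (rule pm_finite_imp_mult_right_le_ident)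
  moreover have "\<exists>s'>0. f t s' \<le> e \<Longrightarrow> \<exists>s'>0. pm_finite f (f t s')"
    using below_ident by blast
  moreover have "\<exists>s'>0. pm_finite f (f t s') \<Longrightarrow> pm_finite f t"
    using pm_finite_of_mult_right by blast
  ultimately show ?thesis
    by argo
qed

end
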